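(* Let $n,k\ge 1$ be integers and let $X$ be an isotropic random vector in $\mathbb{R}^n$. Assume that linear forms satisfy the following small-ball condition: there is some $\lambda>0$ for which $$\Pr\big(|\langle x,X\rangle|\ge \lambda\|x\|_{\ell_2^n}\big)\ge 99/100\quad\text{for every } x\in\mathbb{R}^n.$$ Let $X_1,\dots,X_k$ be independent copies of $X$ and let $\Gamma:\mathbb{R}^n\to\mathbb{R}^k$ be the random matrix $\Gamma=k^{-1/2}\sum_{i=1}^k\langle X_i,\cdot\rangle e_i$. Then there exists a constant $c$ that depends only on $\lambda$ such that, for a convex body $T\subset\mathbb{R}^n$, with probability at least $3/4$, $$\operatorname{diam}\big(T\cap\ker(\Gamma)\big)\le \frac{c}{\sqrt{k}}\cdot\max\Big\{\mathbb{E}\|G\|_{T^\circ},\ \mathbb{E}\Big\|k^{-1/2}\sum_{i=1}^k X_i\Big\|_{T^\circ}\Big\},$$ where $\operatorname{diam}$ denotes the Euclidean ($\ell_2^n$) diameter.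
   Context: A random vector $X$ in $\mathbb{R}^n$ (with distribution $\mu$) is called isotropic if $\mu$ is symmetric (i.e. $X$ and $-X$ have the same distribution) and $\mathbb{E}\langle x,X\rangle^2=\|x\|_{\ell_2^n}^2$ for every $x\in\mathbb{R}^n$. A convex body is a convex, centrally-symmetric subset of $\mathbb{R}^n$ with non-empty interior. $(e_i)_{i=1}^k$ is the standard basis of $\mathbb{R}^k$. For $y\in\mathbb{R}^n$, $\|y\|_{T^\circ}=\sup_{t\in T}|\langle y,t\rangle|$. $G=(g_1,\dots,g_n)$ denotes the standard Gaussian vector in $\mathbb{R}^n$, so $\mathbb{E}\|G\|_{T^\circ}=\mathbb{E}\sup_{t\in T}|\langle G,t\rangle|$. *)

theory Defs
  imports "HOL-Probability.Probability"
begin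

text \<open>Convention: a vector of R^n is a function nat => real vanishing at indices >= n.
  Only the coordinates 0..n-1 are ever used for inner products / norms.\<close>

definition Rn :: "nat \<Rightarrow> (nat \<Rightarrow> real) set" where
  "Rn n = {x. \<forall>i. n \<le> i \<longrightarrow> x i = 0}"

definition inner_n :: "nat \<Rightarrow> (nat \<Rightarrow> real) \<Rightarrow> (nat \<Rightarrow> real) \<Rightarrow> real" where
  "inner_n n x y = (\<Sum>i<n. x i * y i)"

definition norm_n :: "nat \<Rightarrow> (nat \<Rightarrow> real) \<Rightarrow> real" where
  "norm_n n x = sqrt (\<Sum>i<n. (x i)\<^sup>2)"

text \<open>Euclidean diameter (possibly infinite; 0 for the empty set).\<close>
definition diam_n :: "nat \<Rightarrow> (nat \<Rightarrow> real) set \<Rightarrow> ennreal" where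
  "diam_n n S = (SUP x\<in>S. SUP y\<in>S. ennreal (norm_n n (\<lambda>i. x i - y i)))"

definition dual_norm :: "nat \<Rightarrow> (nat \<Rightarrow> real) set \<Rightarrow> (nat \<Rightarrow> real) \<Rightarrow> ennreal" where
  "dual_norm n T y = (SUP t\<in>T. ennreal \<bar>inner_n n y t\<bar>)"

definition convex_body :: "nat \<Rightarrow> (nat \<Rightarrow> real) set \<Rightarrow> bool" where
  "convex_body n T \<longleftrightarrow> T \<subseteq> Rn n
     \<and> (\<forall>x\<in>T. \<forall>y\<in>T. \<forall>u::real. 0 \<le> u \<and> u \<le> 1 \<longrightarrow> (\<lambda>i. u * x i + (1 - u) * y i) \<in> T)
     \<and> (\<forall>x\<in>T. (\<lambda>i. - x i) \<in> T)
     \<and> (\<exists>x\<in>Rn n. \<exists>r>0. {y\<in>Rn n. norm_n n (\<lambda>i. y i - x i) < r} \<subseteq> T)"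

abbreviation RnM :: "nat \<Rightarrow> (nat \<Rightarrow> real) measure" where
  "RnM n \<equiv> PiM {..<n} (\<lambda>_. borel)"

abbreviation gaussM :: "nat \<Rightarrow> (nat \<Rightarrow> real) measure" where
  "gaussM n \<equiv> PiM {..<n} (\<lambda>_. density lborel (\<lambda>x. ennreal (std_normal_density x)))"

text \<open>Kernel of Gamma = k^(-1/2) sum_i <X_i, .> e_i (as a map R^n -> R^k), as a subset of R^n,
  for a realisation w = (X_0,...,X_(k-1)) of the k copies.\<close>
definition ker_Gamma :: "nat \<Rightarrow> nat \<Rightarrow> (nat \<Rightarrow> nat \<Rightarrow> real) \<Rightarrow> (nat \<Rightarrow> real) set" where
  "ker_Gamma n k w = {x\<in>Rn n. (\<lambda>j. (\<Sum>i<k. inner_n n (w i) x * (if j = i then 1 else 0)) / sqrt (real k)) = (\<lambda>j. 0)}"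

end

theory Submission
  imports Defs
begin

text \<open>If \<open>x \<in> T\<close> lies in the kernel then \<open>\<langle>X\<^sub>i, x\<rangle> = 0\<close> for all \<open>i\<close>, whereas the small-ball
  condition gives \<open>\<bbbE>\<bar>\<langle>X, x\<rangle>\<bar> \<ge> \<kappa> \<parallel>x\<parallel>\<close> with \<open>\<kappa> = 99/100 \<lambda>\<close>. Hence the deficit
  \<open>\<Sum>\<^sub>i (\<bbbE>\<bar>\<langle>X, x\<rangle>\<bar> - \<bar>\<langle>X\<^sub>i, x\<rangle>\<bar>)\<close> is at least \<open>k \<kappa> \<parallel>x\<parallel>\<close>. On the other hand,
  symmetrization (a ghost sample, random sign swaps, the contraction principle for \<open>\<bar>_\<bar>\<close>, and
  the symmetry of \<open>X\<close> to remove the signs) bounds the expected supremum of the deficit over \<open>T\<close>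
  by \<open>2 \<bbbE> sup\<^sub>t\<^sub>\<in>\<^sub>T \<Sum>\<^sub>i \<langle>X\<^sub>i, t\<rangle>\<close>, which is \<open>2 \<surd>k\<close> times the expected dual norm of
  \<open>k\<^sup>-\<^sup>1\<^sup>/\<^sup>2 \<Sum>\<^sub>i X\<^sub>i\<close>. Markov's inequality then bounds the radius of \<open>T \<inter> ker \<Gamma>\<close> with
  probability \<open>3/4\<close>. To stay with measurable functions, suprema
  are approximated by maxima over finite pieces of a countable dense subset.\<close>

section \<open>Averaging over sign patterns\<close>

text \<open>Summing over all \<open>S \<subseteq> {..<k}\<close> averages over the \<open>2\<^sup>k\<close> sign vectors: it is the expectation
  over independent Rademacher signs \<open>sign_pattern S i\<close>.\<close>
definition sign_pattern :: "nat set \<Rightarrow> nat \<Rightarrow> real" where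
  "sign_pattern S i = (if i \<in> S then 1 else -1)"

lemma Max_add_le:
  fixes f g :: "'a \<Rightarrow> real"
  assumes "finite F" "F \<noteq> {}"
  shows "(MAX x\<in>F. f x + g x) \<le> (MAX x\<in>F. f x) + (MAX x\<in>F. g x)"
proof -
  have "(MAX x\<in>F. f x + g x) \<in> (\<lambda>x. f x + g x) ` F"
    using assms by (intro Max_in) auto
  then obtain x where "x \<in> F" "(MAX x\<in>F. f x + g x) = f x + g x"
    by auto
  then show ?thesis
    using assms by (auto intro!: add_mono Max_ge)
qed

lemma Max_plus_abs_add_Max_minus_abs_le:
  fixes c a :: "'x \<Rightarrow> real"
  assumes "finite F" "F \<noteq> {}"
  shows "(MAX x\<in>F. c x + \<bar>a x\<bar>) + (MAX x\<in>F. c x - \<bar>a x\<bar>)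
       \<le> (MAX x\<in>F. c x + a x) + (MAX x\<in>F. c x - a x)"
proof -
  have "(MAX x\<in>F. c x + \<bar>a x\<bar>) \<in> (\<lambda>x. c x + \<bar>a x\<bar>) ` F"
    "(MAX x\<in>F. c x - \<bar>a x\<bar>) \<in> (\<lambda>x. c x - \<bar>a x\<bar>) ` F"
    using assms by (intro Max_in; auto)+
  then obtain x y where x: "x \<in> F" "(MAX x\<in>F. c x + \<bar>a x\<bar>) = c x + \<bar>a x\<bar>"
    and y: "y \<in> F" "(MAX x\<in>F. c x - \<bar>a x\<bar>) = c y - \<bar>a y\<bar>"
    by auto
  have "c z + a z \<le> (MAX x\<in>F. c x + a x)" "c z - a z \<le> (MAX x\<in>F. c x - a x)" if "z \<in> F" for z
    using assms that by (auto intro: Max_ge)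
  \<comment> \<open>pair the larger of \<open>a x\<close>, \<open>a y\<close> with the plus sign\<close>
  then show ?thesis
    using x y by (cases "a x \<ge> a y") (fastforce+)
qed

lemma sum_Pow_lessThan_Suc:
  "(\<Sum>S\<in>Pow {..<Suc k}. g S) = (\<Sum>S\<in>Pow {..<k}. g (insert k S) + g S)"
proof -
  have "Pow {..<Suc k} = Pow {..<k} \<union> insert k ` Pow {..<k}"
    by (simp add: lessThan_Suc Pow_insert)
  moreover have "Pow {..<k} \<inter> insert k ` Pow {..<k} = {}" by auto
  moreover have "inj_on (insert k) (Pow {..<k})"
    by (auto simp: inj_on_def)
  ultimately show ?thesis
    by (simp add: sum.union_disjoint sum.reindex sum.distrib add.commute)
qed

lemma sum_lessThan_Suc_sign_pattern:
  assumes "S \<subseteq> {..<k}"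
  shows "(\<Sum>i<Suc k. sign_pattern (insert k S) i * f i) = (\<Sum>i<k. sign_pattern S i * f i) + f k"
    and "(\<Sum>i<Suc k. sign_pattern S i * f i) = (\<Sum>i<k. sign_pattern S i * f i) - f k"
  using assms by (auto simp: sign_pattern_def intro!: sum.cong)

text \<open>The Rademacher contraction principle for \<open>\<bar>_\<bar>\<close>, proved one sign at a time.\<close>
lemma sum_Pow_Max_sign_pattern_abs_le:
  fixes a :: "nat \<Rightarrow> 'x \<Rightarrow> real"
  assumes "finite F" "F \<noteq> {}"
  shows "(\<Sum>S\<in>Pow {..<k}. MAX x\<in>F. b x + (\<Sum>i<k. sign_pattern S i * \<bar>a i x\<bar>))
       \<le> (\<Sum>S\<in>Pow {..<k}. MAX x\<in>F. b x + (\<Sum>i<k. sign_pattern S i * a i x))"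
proof (induction k arbitrary: b)
  case 0
  then show ?case by simp
next
  case (Suc k)
  let ?sa = "\<lambda>S x. \<Sum>i<k. sign_pattern S i * \<bar>a i x\<bar>"
    and ?s = "\<lambda>S x. \<Sum>i<k. sign_pattern S i * a i x"
  have "(\<Sum>S\<in>Pow {..<Suc k}. MAX x\<in>F. b x + (\<Sum>i<Suc k. sign_pattern S i * \<bar>a i x\<bar>))
     = (\<Sum>S\<in>Pow {..<k}. (MAX x\<in>F. (b x + ?sa S x) + \<bar>a k x\<bar>) + (MAX x\<in>F. (b x + ?sa S x) - \<bar>a k x\<bar>))"
    unfolding sum_Pow_lessThan_Suc
    by (intro sum.cong refl, simp only: PowD sum_lessThan_Suc_sign_pattern)
      (simp add: algebra_simps)
  also have "\<dots> \<le> (\<Sum>S\<in>Pow {..<k}.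
      (MAX x\<in>F. (b x + ?sa S x) + a k x) + (MAX x\<in>F. (b x + ?sa S x) - a k x))"
    by (intro sum_mono Max_plus_abs_add_Max_minus_abs_le assms)
  also have "\<dots> = (\<Sum>S\<in>Pow {..<k}. MAX x\<in>F. (b x + a k x) + ?sa S x)
                + (\<Sum>S\<in>Pow {..<k}. MAX x\<in>F. (b x - a k x) + ?sa S x)"
    by (simp add: sum.distrib algebra_simps)
  also have "\<dots> \<le> (\<Sum>S\<in>Pow {..<k}. MAX x\<in>F. (b x + a k x) + ?s S x)
                + (\<Sum>S\<in>Pow {..<k}. MAX x\<in>F. (b x - a k x) + ?s S x)"
    by (intro add_mono Suc.IH)
  also have "\<dots> = (\<Sum>S\<in>Pow {..<Suc k}. MAX x\<in>F. b x + (\<Sum>i<Suc k. sign_pattern S i * a i x))"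
    unfolding sum_Pow_lessThan_Suc sum.distrib[symmetric]
    by (intro sum.cong refl, simp only: PowD sum_lessThan_Suc_sign_pattern)
      (simp add: algebra_simps)
  finally show ?case .
qed

lemma sum_Pow_Max_sign_pattern_uminus:
  "(\<Sum>S\<in>Pow {..<k}. MAX x\<in>F. (\<Sum>i<k. - sign_pattern S i * f i x))
   = (\<Sum>S\<in>Pow {..<k}. MAX x\<in>F. (\<Sum>i<k. sign_pattern S i * f i x))"
proof (rule sum.reindex_bij_witness[of _ "\<lambda>S. {..<k} - S" "\<lambda>S. {..<k} - S"])
  fix S assume "S \<in> Pow {..<k}"
  show "(MAX x\<in>F. (\<Sum>i<k. sign_pattern ({..<k} - S) i * f i x))
      = (MAX x\<in>F. (\<Sum>i<k. - sign_pattern S i * f i x))"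
    by (intro arg_cong[where f=Max] image_cong refl sum.cong) (auto simp: sign_pattern_def)
qed auto

lemma sum_Pow_Max_sign_pattern_abs_diff_le:
  fixes a b :: "nat \<Rightarrow> 'x \<Rightarrow> real"
  assumes F: "finite F" "F \<noteq> {}"
  shows "(\<Sum>S\<in>Pow {..<k}. MAX x\<in>F. \<Sum>i<k. sign_pattern S i * (\<bar>a i x\<bar> - \<bar>b i x\<bar>))
       \<le> (\<Sum>S\<in>Pow {..<k}. MAX x\<in>F. \<Sum>i<k. sign_pattern S i * a i x)
        + (\<Sum>S\<in>Pow {..<k}. MAX x\<in>F. \<Sum>i<k. sign_pattern S i * b i x)"
proof -
  have "(\<Sum>S\<in>Pow {..<k}. MAX x\<in>F. \<Sum>i<k. sign_pattern S i * (\<bar>a i x\<bar> - \<bar>b i x\<bar>))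
     \<le> (\<Sum>S\<in>Pow {..<k}. MAX x\<in>F. \<Sum>i<k. sign_pattern S i * \<bar>a i x\<bar>)
      + (\<Sum>S\<in>Pow {..<k}. MAX x\<in>F. \<Sum>i<k. - sign_pattern S i * \<bar>b i x\<bar>)"
    unfolding sum.distrib[symmetric]
    by (intro sum_mono order.trans[OF _ Max_add_le[OF F]])
       (simp add: sum.distrib[symmetric] algebra_simps)
  also have "\<dots> \<le> (\<Sum>S\<in>Pow {..<k}. MAX x\<in>F. \<Sum>i<k. sign_pattern S i * a i x)
        + (\<Sum>S\<in>Pow {..<k}. MAX x\<in>F. \<Sum>i<k. sign_pattern S i * b i x)"
    using sum_Pow_Max_sign_pattern_abs_le[OF F, of "\<lambda>_. 0"]
    unfolding sum_Pow_Max_sign_pattern_uminus by (intro add_mono) simp_all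
  finally show ?thesis .
qed

lemma measurable_PiM_componentwise:
  assumes "\<And>i. i \<in> I \<Longrightarrow> f i \<in> measurable M N"
  shows "(\<lambda>x. \<lambda>i\<in>I. f i (x i)) \<in> measurable (PiM I (\<lambda>_. M)) (PiM I (\<lambda>_. N))"
proof (intro measurable_restrict)
  fix i assume "i \<in> I"
  then show "(\<lambda>x. f i (x i)) \<in> measurable (PiM I (\<lambda>_. M)) N"
    using measurable_compose[OF measurable_component_singleton[of i I "\<lambda>_. M"] assms[of i]] by simp
qed

lemma distr_PiM_componentwise:
  assumes fin: "finite I" and M: "prob_space M"
    and f[measurable]: "\<And>i. i \<in> I \<Longrightarrow> f i \<in> measurable M M"
    and distr_f: "\<And>i. i \<in> I \<Longrightarrow> distr M M (f i) = M"
  shows "distr (PiM I (\<lambda>_. M)) (PiM I (\<lambda>_. M)) (\<lambda>x. \<lambda>i\<in>I. f i (x i)) = PiM I (\<lambda>_. M)"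
proof -
  interpret M: product_prob_space "\<lambda>_. M"
    by (intro product_prob_spaceI M)
  note meas = measurable_PiM_componentwise[of I f M M, OF f]
  show ?thesis
  proof (rule M.PiM_eqI[OF fin])
    fix A assume A: "\<And>i. i \<in> I \<Longrightarrow> A i \<in> sets M"
    have "emeasure (distr (PiM I (\<lambda>_. M)) (PiM I (\<lambda>_. M)) (\<lambda>x. \<lambda>i\<in>I. f i (x i))) (Pi\<^sub>E I A)
        = emeasure (PiM I (\<lambda>_. M)) ((\<lambda>x. \<lambda>i\<in>I. f i (x i)) -` Pi\<^sub>E I A \<inter> space (PiM I (\<lambda>_. M)))"
      by (intro emeasure_distr meas sets_PiM_I_finite fin A)
    also have "(\<lambda>x. \<lambda>i\<in>I. f i (x i)) -` Pi\<^sub>E I A \<inter> space (PiM I (\<lambda>_. M))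
             = Pi\<^sub>E I (\<lambda>i. f i -` A i \<inter> space M)"
      using A by (auto simp: space_PiM PiE_def Pi_def extensional_def)
    also have "emeasure (PiM I (\<lambda>_. M)) \<dots> = (\<Prod>i\<in>I. emeasure M (f i -` A i \<inter> space M))"
      using A by (intro M.emeasure_PiM fin) (auto intro: measurable_sets)
    also have "\<dots> = (\<Prod>i\<in>I. emeasure (distr M M (f i)) (A i))"
      using A by (intro prod.cong emeasure_distr [symmetric]) auto
    also have "\<dots> = (\<Prod>i\<in>I. emeasure M (A i))"
      using distr_f by simp
    finally show "emeasure (distr (PiM I (\<lambda>_. M)) (PiM I (\<lambda>_. M)) (\<lambda>x. \<lambda>i\<in>I. f i (x i))) (Pi\<^sub>E I A)
        = (\<Prod>i\<in>I. emeasure M (A i))" .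
  qed simp
qed

lemma integral_PiM_componentwise:
  fixes G :: "_ \<Rightarrow> real"
  assumes "finite I" "prob_space M"
    and "\<And>i. i \<in> I \<Longrightarrow> f i \<in> measurable M M" "\<And>i. i \<in> I \<Longrightarrow> distr M M (f i) = M"
    and "integrable (PiM I (\<lambda>_. M)) G"
  shows "(\<integral>\<omega>. G \<omega> \<partial>PiM I (\<lambda>_. M)) = (\<integral>\<omega>. G (\<lambda>i\<in>I. f i (\<omega> i)) \<partial>PiM I (\<lambda>_. M))"
  using integral_distr[OF measurable_PiM_componentwise, of I f M M G] assms
  by (simp add: distr_PiM_componentwise borel_measurable_integrable)

lemma integral_PiM_reindex:
  fixes G :: "_ \<Rightarrow> real"
  assumes "prob_space M" "inj_on g J" "g ` J \<subseteq> I" "integrable (PiM J (\<lambda>_. M)) G"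
  shows "(\<integral>\<omega>. G \<omega> \<partial>PiM J (\<lambda>_. M)) = (\<integral>\<omega>. G (\<lambda>j\<in>J. \<omega> (g j)) \<partial>PiM I (\<lambda>_. M))"
proof -
  have "distr (PiM I (\<lambda>_. M)) (PiM J (\<lambda>_. M)) (\<lambda>\<omega>. \<lambda>j\<in>J. \<omega> (g j)) = PiM J (\<lambda>_. M)"
    using distr_PiM_reindex[of I "\<lambda>_. M" g J] assms by auto
  moreover have "(\<lambda>\<omega>. \<lambda>j\<in>J. \<omega> (g j)) \<in> measurable (PiM I (\<lambda>_. M)) (PiM J (\<lambda>_. M))"
    using assms by (intro measurable_restrict measurable_component_singleton) auto
  ultimately show ?thesis
    using integral_distr[of "\<lambda>\<omega>. \<lambda>j\<in>J. \<omega> (g j)" "PiM I (\<lambda>_. M)" "PiM J (\<lambda>_. M)" G] assms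
    by (simp add: borel_measurable_integrable)
qed

lemma
  fixes g :: "'a \<Rightarrow> real"
  assumes "prob_space M" "i \<in> I" "integrable M g"
  shows integrable_PiM_component: "integrable (PiM I (\<lambda>_. M)) (\<lambda>\<omega>. g (\<omega> i))"
    and integral_PiM_component: "(\<integral>\<omega>. g (\<omega> i) \<partial>PiM I (\<lambda>_. M)) = (\<integral>y. g y \<partial>M)"
proof -
  have distr: "distr (PiM I (\<lambda>_. M)) M (\<lambda>\<omega>. \<omega> i) = M"
    using distr_PiM_component[of I "\<lambda>_. M" i] assms by auto
  then show "integrable (PiM I (\<lambda>_. M)) (\<lambda>\<omega>. g (\<omega> i))"
    using integrable_distr_eq[of "\<lambda>\<omega>. \<omega> i" "PiM I (\<lambda>_. M)" M g] assms by auto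
  show "(\<integral>\<omega>. g (\<omega> i) \<partial>PiM I (\<lambda>_. M)) = (\<integral>y. g y \<partial>M)"
    using integral_distr[of "\<lambda>\<omega>. \<omega> i" "PiM I (\<lambda>_. M)" M g] distr assms
    by (simp add: borel_measurable_integrable)
qed

lemma Max_integral_le_integral_Max:
  fixes f :: "'x \<Rightarrow> 'a \<Rightarrow> real"
  assumes "finite F" "F \<noteq> {}" "\<And>x. x \<in> F \<Longrightarrow> integrable N (f x)"
  shows "(MAX x\<in>F. \<integral>\<omega>. f x \<omega> \<partial>N) \<le> (\<integral>\<omega>. (MAX x\<in>F. f x \<omega>) \<partial>N)"
  using assms by (subst Max_le_iff) (auto intro!: integral_mono integrable_MAX Max_ge)

section \<open>Symmetrization\<close>

locale symmetric_family =
  fixes M :: "'a measure" and L :: "'x \<Rightarrow> 'a \<Rightarrow> real" and s :: "'a \<Rightarrow> 'a" and F :: "'x set"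
  assumes M: "prob_space M" and finite_F: "finite F" and F_ne: "F \<noteq> {}"
    and integrable_L: "\<And>x. x \<in> F \<Longrightarrow> integrable M (L x)"
    and measurable_s: "s \<in> measurable M M" and distr_s: "distr M M s = M"
    and L_s: "\<And>x y. x \<in> F \<Longrightarrow> y \<in> space M \<Longrightarrow> L x (s y) = - L x y"
begin

abbreviation sample :: "nat \<Rightarrow> (nat \<Rightarrow> 'a) measure" where
  "sample k \<equiv> PiM {..<k} (\<lambda>_. M)"

definition mean_abs :: "'x \<Rightarrow> real" where
  "mean_abs x = (\<integral>y. \<bar>L x y\<bar> \<partial>M)"

text \<open>The first \<open>k\<close> coordinates of a sample of size \<open>2 k\<close> are compared with a ghost copy in
  the last \<open>k\<close> coordinates.\<close>
definition symmetrized_process :: "nat \<Rightarrow> (nat \<Rightarrow> 'a) \<Rightarrow> real" where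
  "symmetrized_process k \<omega> = (MAX x\<in>F. \<Sum>i<k. \<bar>L x (\<omega> (k + i))\<bar> - \<bar>L x (\<omega> i)\<bar>)"

lemma integrable_component: "j \<in> I \<Longrightarrow> x \<in> F \<Longrightarrow> integrable (PiM I (\<lambda>_. M)) (\<lambda>\<omega>. L x (\<omega> j))"
  by (intro integrable_PiM_component M integrable_L)

lemma integrable_const_PiM: "integrable (PiM I (\<lambda>_. M)) (\<lambda>_. c)"
proof -
  interpret prob_space "PiM I (\<lambda>_. M)" by (intro prob_space_PiM M)
  show ?thesis by simp
qed

lemmas integrable_rules = integrable_const_PiM integrable_MAX[OF finite_F F_ne]
  Bochner_Integration.integrable_sum Bochner_Integration.integrable_mult_right
  Bochner_Integration.integrable_diff integrable_abs integrable_component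

text \<open>Applied to the coordinates outside \<open>S\<close>, the symmetry \<open>s\<close> absorbs the signs.\<close>
lemma integral_Max_sign_pattern_reindex:
  assumes g: "inj_on g {..<k}" "g ` {..<k} \<subseteq> {..<K}" and S: "S \<subseteq> {..<k}"
  shows "(\<integral>\<omega>. (MAX x\<in>F. \<Sum>i<k. sign_pattern S i * L x (\<omega> (g i))) \<partial>sample K)
       = (\<integral>\<omega>. (MAX x\<in>F. \<Sum>i<k. L x (\<omega> i)) \<partial>sample k)"
proof -
  define f where "f i = (if i \<in> S then (\<lambda>y. y) else s)" for i
  have f: "f i \<in> measurable M M" "distr M M (f i) = M" for i
    using measurable_s distr_s by (auto simp: f_def distr_id2)
  have L_f: "L x (f i (\<omega> i)) = sign_pattern S i * L x (\<omega> i)"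
    if "\<omega> \<in> space (sample k)" "x \<in> F" "i < k" for \<omega> x i
  proof -
    have "\<omega> i \<in> space M" using that by (auto simp: space_PiM)
    then show ?thesis using that by (auto simp: f_def sign_pattern_def L_s)
  qed
  have "(\<integral>\<omega>. (MAX x\<in>F. \<Sum>i<k. sign_pattern S i * L x (\<omega> (g i))) \<partial>sample K)
      = (\<integral>\<omega>. (MAX x\<in>F. \<Sum>i<k. sign_pattern S i * L x (\<omega> i)) \<partial>sample k)"
    by (subst integral_PiM_reindex[OF M g])
      (auto intro!: integrable_rules Bochner_Integration.integral_cong
        arg_cong[where f=Max] image_cong sum.cong)
  also have "\<dots> = (\<integral>\<omega>. (MAX x\<in>F. \<Sum>i<k. L x ((\<lambda>i\<in>{..<k}. f i (\<omega> i)) i)) \<partial>sample k)"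
    by (intro Bochner_Integration.integral_cong refl)
      (auto intro!: arg_cong[where f=Max] image_cong sum.cong simp: L_f)
  also have "\<dots> = (\<integral>\<omega>. (MAX x\<in>F. \<Sum>i<k. L x (\<omega> i)) \<partial>sample k)"
    by (rule integral_PiM_componentwise[symmetric, OF _ M f]) (auto intro!: integrable_rules)
  finally show ?thesis .
qed

text \<open>Swapping the coordinates \<open>i\<close> and \<open>k + i\<close> for \<open>i \<notin> S\<close> preserves the product measure.\<close>
lemma integral_symmetrized_process_sign_pattern:
  assumes S: "S \<subseteq> {..<k}"
  shows "(\<integral>\<omega>. symmetrized_process k \<omega> \<partial>sample (2*k))
       = (\<integral>\<omega>. (MAX x\<in>F. \<Sum>i<k. sign_pattern S i * (\<bar>L x (\<omega> (k+i))\<bar> - \<bar>L x (\<omega> i)\<bar>)) \<partial>sample (2*k))"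
proof -
  define \<sigma> where "\<sigma> n = (if n < k \<and> n \<notin> S then n + k
      else if k \<le> n \<and> n < 2*k \<and> n - k \<notin> S then n - k else n)" for n
  have \<sigma>: "inj_on \<sigma> {..<2*k}" "\<sigma> ` {..<2*k} \<subseteq> {..<2*k}"
    by (auto simp: inj_on_def \<sigma>_def split: if_splits)
  have swap: "\<bar>L x (\<omega> (\<sigma> (k+i)))\<bar> - \<bar>L x (\<omega> (\<sigma> i))\<bar>
      = sign_pattern S i * (\<bar>L x (\<omega> (k+i))\<bar> - \<bar>L x (\<omega> i)\<bar>)" if "i < k" for \<omega> x i
    using that by (auto simp: \<sigma>_def sign_pattern_def add.commute)
  show ?thesis
    unfolding symmetrized_process_def
    by (subst integral_PiM_reindex[OF M \<sigma>])
      (auto intro!: integrable_rules Bochner_Integration.integral_cong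
        arg_cong[where f=Max] image_cong sum.cong simp: swap)
qed

text \<open>Jensen's inequality for the maximum, with the mean replaced by an independent ghost sample.\<close>
lemma Max_centred_le_integral_ghost:
  fixes k :: nat and u :: "nat \<Rightarrow> 'a"
  shows "(MAX x\<in>F. \<Sum>i<k. mean_abs x - \<bar>L x (u i)\<bar>)
     \<le> (\<integral>v. (MAX x\<in>F. \<Sum>i<k. \<bar>L x (v (k+i))\<bar> - \<bar>L x (u i)\<bar>) \<partial>PiM {k..<2*k} (\<lambda>_. M))"
proof -
  interpret J: prob_space "PiM {k..<2*k} (\<lambda>_. M)" by (intro prob_space_PiM M)
  have "(\<Sum>i<k. mean_abs x - \<bar>L x (u i)\<bar>)
      = (\<integral>v. (\<Sum>i<k. \<bar>L x (v (k+i))\<bar> - \<bar>L x (u i)\<bar>) \<partial>PiM {k..<2*k} (\<lambda>_. M))" if "x \<in> F" for x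
  proof -
    have "(\<integral>v. \<bar>L x (v (k+i))\<bar> \<partial>PiM {k..<2*k} (\<lambda>_. M)) = mean_abs x" if "i < k" for i
      unfolding mean_abs_def using \<open>x \<in> F\<close> that
      by (intro integral_PiM_component M integrable_abs integrable_L) auto
    then show ?thesis
      using that
      by (subst Bochner_Integration.integral_sum, simp add: integrable_rules,
          intro sum.cong refl, subst Bochner_Integration.integral_diff)
         (auto intro!: integrable_rules simp: J.prob_space)
  qed
  then have "(MAX x\<in>F. \<Sum>i<k. mean_abs x - \<bar>L x (u i)\<bar>)
      = (MAX x\<in>F. \<integral>v. (\<Sum>i<k. \<bar>L x (v (k+i))\<bar> - \<bar>L x (u i)\<bar>) \<partial>PiM {k..<2*k} (\<lambda>_. M))"
    by (auto intro!: arg_cong[where f=Max] image_cong)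
  also have "\<dots> \<le> (\<integral>v. (MAX x\<in>F. \<Sum>i<k. \<bar>L x (v (k+i))\<bar> - \<bar>L x (u i)\<bar>) \<partial>PiM {k..<2*k} (\<lambda>_. M))"
    by (rule Max_integral_le_integral_Max[OF finite_F F_ne]) (auto intro!: integrable_rules)
  finally show ?thesis .
qed

lemma integral_centred_le_symmetrized:
  "(\<integral>\<omega>. (MAX x\<in>F. \<Sum>i<k. mean_abs x - \<bar>L x (\<omega> i)\<bar>) \<partial>sample k)
     \<le> (\<integral>\<omega>. symmetrized_process k \<omega> \<partial>sample (2*k))"
proof -
  interpret product_prob_space "\<lambda>_. M" by (intro product_prob_spaceI M)
  define I J where "I = {..<k}" and "J = {k..<2*k}"
  have IJ: "I \<inter> J = {}" "finite I" "finite J" and IJ_eq: "{..<2*k} = I \<union> J"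
    by (auto simp: I_def J_def)
  have "integrable (sample (2*k)) (symmetrized_process k)"
    unfolding symmetrized_process_def by (auto intro!: integrable_rules)
  then have fold: "(\<integral>\<omega>. symmetrized_process k \<omega> \<partial>sample (2*k))
      = (\<integral>u. (\<integral>v. symmetrized_process k (merge I J (u, v)) \<partial>PiM J (\<lambda>_. M)) \<partial>PiM I (\<lambda>_. M))"
    unfolding IJ_eq by (rule product_integral_fold[OF IJ])
  interpret pair_sigma_finite "PiM I (\<lambda>_. M)" "PiM J (\<lambda>_. M)"
    by (simp add: pair_sigma_finite_def prob_space_imp_sigma_finite prob_space_PiM M)
  have merge: "symmetrized_process k (merge I J (u, v))
      = (MAX x\<in>F. \<Sum>i<k. \<bar>L x (v (k+i))\<bar> - \<bar>L x (u i)\<bar>)" for u v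
    unfolding symmetrized_process_def using IJ
    by (auto intro!: arg_cong[where f=Max] image_cong sum.cong simp: merge_def I_def J_def)
  have "(\<integral>u. (MAX x\<in>F. \<Sum>i<k. mean_abs x - \<bar>L x (u i)\<bar>) \<partial>PiM I (\<lambda>_. M))
      \<le> (\<integral>u. (\<integral>v. symmetrized_process k (merge I J (u, v)) \<partial>PiM J (\<lambda>_. M)) \<partial>PiM I (\<lambda>_. M))"
  proof (rule integral_mono)
    have "integrable (PiM I (\<lambda>_. M) \<Otimes>\<^sub>M PiM J (\<lambda>_. M)) (\<lambda>z. symmetrized_process k (merge I J z))"
      using IJ by (intro integrable_distr[OF measurable_merge])
        (auto intro!: integrable_rules simp: distr_merge symmetrized_process_def I_def J_def)
    then show "integrable (PiM I (\<lambda>_. M))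
        (\<lambda>u. \<integral>v. symmetrized_process k (merge I J (u, v)) \<partial>PiM J (\<lambda>_. M))"
      by (rule integrable_fst'[of "\<lambda>z. symmetrized_process k (merge I J z)", simplified])
    fix u
    show "(MAX x\<in>F. \<Sum>i<k. mean_abs x - \<bar>L x (u i)\<bar>)
        \<le> (\<integral>v. symmetrized_process k (merge I J (u, v)) \<partial>PiM J (\<lambda>_. M))"
      unfolding merge unfolding J_def by (rule Max_centred_le_integral_ghost)
  qed (auto intro!: integrable_rules simp: I_def)
  then show ?thesis
    unfolding fold by (simp add: I_def)
qed

lemma symmetrization:
  "(\<integral>\<omega>. (MAX x\<in>F. \<Sum>i<k. mean_abs x - \<bar>L x (\<omega> i)\<bar>) \<partial>sample k)
     \<le> 2 * (\<integral>\<omega>. (MAX x\<in>F. \<Sum>i<k. L x (\<omega> i)) \<partial>sample k)"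
proof -
  define B where "B = (\<integral>\<omega>. (MAX x\<in>F. \<Sum>i<k. L x (\<omega> i)) \<partial>sample k)"
  define H where "H S \<omega> = (MAX x\<in>F. \<Sum>i<k. sign_pattern S i * (\<bar>L x (\<omega> (k+i))\<bar> - \<bar>L x (\<omega> i)\<bar>))"
    for S \<omega>
  define A where "A S \<omega> = (MAX x\<in>F. \<Sum>i<k. sign_pattern S i * L x (\<omega> (k+i)))" for S \<omega>
  define A' where "A' S \<omega> = (MAX x\<in>F. \<Sum>i<k. sign_pattern S i * L x (\<omega> i))" for S \<omega>
  have integrable: "integrable (sample (2*k)) (H S)" "integrable (sample (2*k)) (A S)"
    "integrable (sample (2*k)) (A' S)" for S
    unfolding H_def A_def A'_def by (auto intro!: integrable_rules)
  have means: "(\<integral>\<omega>. A S \<omega> \<partial>sample (2*k)) = B" "(\<integral>\<omega>. A' S \<omega> \<partial>sample (2*k)) = B"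
    if "S \<subseteq> {..<k}" for S
    unfolding A_def A'_def B_def using that
    by (auto intro!: integral_Max_sign_pattern_reindex[of "\<lambda>i. k + i", simplified]
        integral_Max_sign_pattern_reindex[of "\<lambda>i. i", simplified])
  have "2 ^ k * (\<integral>\<omega>. symmetrized_process k \<omega> \<partial>sample (2*k))
      = (\<Sum>S\<in>Pow {..<k}. \<integral>\<omega>. H S \<omega> \<partial>sample (2*k))"
    unfolding H_def by (simp add: card_Pow integral_symmetrized_process_sign_pattern[symmetric])
  also have "\<dots> = (\<integral>\<omega>. (\<Sum>S\<in>Pow {..<k}. H S \<omega>) \<partial>sample (2*k))"
    using integrable by (simp add: Bochner_Integration.integral_sum)
  also have "\<dots> \<le> (\<integral>\<omega>. (\<Sum>S\<in>Pow {..<k}. A S \<omega>) + (\<Sum>S\<in>Pow {..<k}. A' S \<omega>) \<partial>sample (2*k))"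
    unfolding H_def A_def A'_def using finite_F F_ne
    by (intro integral_mono sum_Pow_Max_sign_pattern_abs_diff_le) (auto intro!: integrable_rules)
  also have "\<dots> = (\<Sum>S\<in>Pow {..<k}. \<integral>\<omega>. A S \<omega> \<partial>sample (2*k))
                 + (\<Sum>S\<in>Pow {..<k}. \<integral>\<omega>. A' S \<omega> \<partial>sample (2*k))"
    using integrable by (simp add: Bochner_Integration.integral_sum)
  also have "\<dots> = 2 ^ k * (2 * B)"
    using means by (simp add: card_Pow)
  finally show ?thesis
    using integral_centred_le_symmetrized[of k] unfolding B_def by simp
qed

end

lemma norm_n_eq_L2_set: "norm_n n x = L2_set x {..<n}"
  by (simp add: norm_n_def L2_set_def)

lemma norm_n_nonneg: "0 \<le> norm_n n x"
  by (simp add: norm_n_def sum_nonneg)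

lemma norm_n_triangle: "norm_n n (\<lambda>i. x i + y i) \<le> norm_n n x + norm_n n y"
  unfolding norm_n_eq_L2_set by (rule L2_set_triangle_ineq)

lemma norm_n_diff_triangle:
  "norm_n n (\<lambda>i. x i - z i) \<le> norm_n n (\<lambda>i. x i - y i) + norm_n n (\<lambda>i. y i - z i)"
  using norm_n_triangle[of n "\<lambda>i. x i - y i" "\<lambda>i. y i - z i"] by simp

lemma norm_n_diff_le: "norm_n n (\<lambda>i. x i - y i) \<le> norm_n n x + norm_n n y"
  using norm_n_triangle[of n x "\<lambda>i. - y i"] by (simp add: norm_n_def)

lemma norm_n_minus_commute: "norm_n n (\<lambda>i. x i - y i) = norm_n n (\<lambda>i. y i - x i)"
  by (simp add: norm_n_def power2_commute)

lemma norm_n_eq_0_iff: "norm_n n x = 0 \<longleftrightarrow> (\<forall>i<n. x i = 0)"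
  unfolding norm_n_eq_L2_set by (auto simp: L2_set_eq_0_iff)

lemma abs_inner_n_le: "\<bar>inner_n n x y\<bar> \<le> norm_n n x * norm_n n y"
proof -
  have "\<bar>inner_n n x y\<bar> \<le> (\<Sum>i<n. \<bar>x i\<bar> * \<bar>y i\<bar>)"
    unfolding inner_n_def by (rule order.trans[OF sum_abs]) (simp add: abs_mult)
  also have "\<dots> \<le> norm_n n x * norm_n n y"
    unfolding norm_n_eq_L2_set by (rule L2_set_mult_ineq)
  finally show ?thesis .
qed

lemma inner_n_commute: "inner_n n x y = inner_n n y x"
  by (simp add: inner_n_def mult.commute)

lemma inner_n_diff_right: "inner_n n x (\<lambda>i. y i - z i) = inner_n n x y - inner_n n x z"
  by (simp add: inner_n_def algebra_simps sum_subtractf)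

lemma convex_body_zero:
  assumes "convex_body n T"
  shows "(\<lambda>_. 0) \<in> T"
proof -
  from assms obtain x r where x_r: "x \<in> Rn n" "r > 0"
    and ball: "{y\<in>Rn n. norm_n n (\<lambda>i. y i - x i) < r} \<subseteq> T"
    unfolding convex_body_def by blast
  from x_r have "x \<in> {y\<in>Rn n. norm_n n (\<lambda>i. y i - x i) < r}"
    by (simp add: norm_n_def)
  with ball have x: "x \<in> T" by blast
  have convex: "\<forall>x\<in>T. \<forall>y\<in>T. \<forall>u::real. 0 \<le> u \<and> u \<le> 1 \<longrightarrow> (\<lambda>i. u * x i + (1 - u) * y i) \<in> T"
    and symmetric: "\<forall>x\<in>T. (\<lambda>i. - x i) \<in> T"
    using assms unfolding convex_body_def by blast+
  have "(\<lambda>i. 1/2 * x i + (1 - 1/2) * (- x i)) \<in> T"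
    using x symmetric by (intro convex[rule_format]) auto
  then show ?thesis by simp
qed

lemma inner_n_ker_Gamma:
  assumes "x \<in> ker_Gamma n k w" "i < k"
  shows "inner_n n (w i) x = 0"
proof -
  have "(\<Sum>i'<k. inner_n n (w i') x * (if i = i' then 1 else 0)) / sqrt (real k) = 0"
    using assms(1) unfolding ker_Gamma_def by (blast dest: fun_cong[where x=i])
  moreover have "(\<Sum>i'<k. inner_n n (w i') x * (if i = i' then 1 else 0)) = inner_n n (w i) x"
    using assms(2) by (simp add: if_distrib[of "\<lambda>c. _ * c"] cong: if_cong)
  ultimately show ?thesis
    using assms(2) by simp
qed

lemma diam_n_le:
  assumes "\<And>x. x \<in> S \<Longrightarrow> norm_n n x \<le> \<rho>"
  shows "diam_n n S \<le> ennreal (2 * \<rho>)"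
  unfolding diam_n_def
proof (intro SUP_least ennreal_leI)
  fix x y assume "x \<in> S" "y \<in> S"
  then show "norm_n n (\<lambda>i. x i - y i) \<le> 2 * \<rho>"
    using norm_n_diff_le[of n x y] assms[of x] assms[of y] by linarith
qed

definition rat_vector :: "rat list \<Rightarrow> nat \<Rightarrow> real" where
  "rat_vector q i = (if i < length q then of_rat (q ! i) else 0)"

lemma rat_vector_approx:
  assumes "\<eta> > 0"
  shows "\<exists>q. norm_n n (\<lambda>i. x i - rat_vector q i) < \<eta>"
proof -
  define \<eta>' where "\<eta>' = \<eta> / (real n + 1)"
  have "\<eta>' > 0" using assms by (simp add: \<eta>'_def)
  have "\<exists>r::rat. \<bar>x i - of_rat r\<bar> < \<eta>'" for i
  proof -
    obtain a where a: "a \<in> \<rat>" "x i < a" "a < x i + \<eta>'"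
      using Rats_dense_in_real[of "x i" "x i + \<eta>'"] \<open>\<eta>' > 0\<close> by auto
    then obtain r where "a = of_rat r" by (auto elim: Rats_cases)
    with a show ?thesis by (intro exI[of _ r]) auto
  qed
  then obtain f where f: "\<And>i. \<bar>x i - of_rat (f i)\<bar> < \<eta>'" by metis
  define q where "q = map f [0..<n]"
  have "norm_n n (\<lambda>i. x i - rat_vector q i) \<le> (\<Sum>i<n. \<bar>x i - rat_vector q i\<bar>)"
    unfolding norm_n_eq_L2_set by (rule L2_set_le_sum_abs)
  also have "\<dots> \<le> (\<Sum>i<n. \<eta>')"
    using f by (intro sum_mono) (auto simp: rat_vector_def q_def less_imp_le)
  also have "\<dots> < \<eta>" using assms by (simp add: \<eta>'_def field_simps)
  finally show ?thesis by blast
qed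

lemma countable_dense_subset:
  fixes S :: "(nat \<Rightarrow> real) set"
  obtains D where "countable D" "D \<subseteq> S"
    "\<And>x \<delta>. x \<in> S \<Longrightarrow> 0 < \<delta> \<Longrightarrow> \<exists>y\<in>D. norm_n n (\<lambda>i. y i - x i) < \<delta>"
proof
  define near where "near q m = {y\<in>S. norm_n n (\<lambda>i. y i - rat_vector q i) < 1 / Suc m}" for q m
  define D where "D = (\<lambda>(q, m). SOME y. y \<in> near q m) ` {(q, m). near q m \<noteq> {}}"
  have near: "(SOME y. y \<in> near q m) \<in> near q m" if "near q m \<noteq> {}" for q m
    using that by (simp add: some_in_eq)
  show "countable D"
    unfolding D_def by (rule countable_image) simp
  show "D \<subseteq> S"
    using near by (auto simp: D_def near_def)
  fix x and \<delta> :: real assume x: "x \<in> S" and "0 < \<delta>"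
  then obtain m where m: "1 / Suc m < \<delta> / 2"
    using reals_Archimedean[of "\<delta> / 2"] by (auto simp: inverse_eq_divide)
  obtain q where q: "norm_n n (\<lambda>i. x i - rat_vector q i) < 1 / Suc m"
    using rat_vector_approx[of "1 / Suc m"] by auto
  then have "x \<in> near q m"
    using x by (simp add: near_def)
  define y where "y = (SOME y. y \<in> near q m)"
  then have "y \<in> D" "y \<in> near q m"
    using \<open>x \<in> near q m\<close> near by (auto simp: D_def)
  moreover have "norm_n n (\<lambda>i. y i - x i)
      \<le> norm_n n (\<lambda>i. y i - rat_vector q i) + norm_n n (\<lambda>i. rat_vector q i - x i)"
    by (rule norm_n_diff_triangle)
  moreover have "norm_n n (\<lambda>i. y i - rat_vector q i) < 1 / Suc m"
    using \<open>y \<in> near q m\<close> by (simp only: near_def mem_Collect_eq)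
  ultimately have "norm_n n (\<lambda>i. y i - x i) < \<delta>"
    using q m norm_n_minus_commute[of n x "rat_vector q"] by linarith
  with \<open>y \<in> D\<close> show "\<exists>y\<in>D. norm_n n (\<lambda>i. y i - x i) < \<delta>" by blast
qed

lemma countable_incseq_finite_cover:
  assumes "countable D"
  obtains F :: "nat \<Rightarrow> 'a set" where "\<And>m. finite (F m)" "\<And>m. z \<in> F m" "\<And>m. F m \<subseteq> insert z D"
    "incseq F" "D \<subseteq> (\<Union>m. F m)"
proof
  define d where "d = from_nat_into (insert z D)"
  show "finite (insert z (d ` {..m}))" "z \<in> insert z (d ` {..m})" for m
    by auto
  show "insert z (d ` {..m}) \<subseteq> insert z D" for m
    using range_from_nat_into_subset[of "insert z D"] by (auto simp: d_def)
  show "incseq (\<lambda>m. insert z (d ` {..m}))"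
    by (auto simp: incseq_def)
  show "D \<subseteq> (\<Union>m. insert z (d ` {..m}))"
    using from_nat_into_surj[of "insert z D"] assms by (fastforce simp: d_def)
qed

section \<open>The small-ball argument\<close>

locale small_ball_setting =
  fixes n k :: nat and \<mu> :: "(nat \<Rightarrow> real) measure" and T :: "(nat \<Rightarrow> real) set" and lam :: real
  assumes k: "1 \<le> k" and lam: "0 < lam" and \<mu>: "prob_space \<mu>" and sets_\<mu>: "sets \<mu> = sets (RnM n)"
    and symmetric: "distr \<mu> (RnM n) (\<lambda>y. \<lambda>i\<in>{..<n}. - y i) = \<mu>"
    and isotropic: "\<forall>x\<in>Rn n. (\<integral>y. (inner_n n x y)\<^sup>2 \<partial>\<mu>) = (norm_n n x)\<^sup>2"
    and small_ball: "\<forall>x\<in>Rn n. measure \<mu> {y\<in>space \<mu>. \<bar>inner_n n x y\<bar> \<ge> lam * norm_n n x} \<ge> 99/100"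
    and convex_body: "convex_body n T"
begin

abbreviation \<kappa> :: real where "\<kappa> \<equiv> 99/100 * lam"

abbreviation samples :: "(nat \<Rightarrow> nat \<Rightarrow> real) measure" where
  "samples \<equiv> PiM {..<k} (\<lambda>_. \<mu>)"

abbreviation normalized_sum :: "(nat \<Rightarrow> nat \<Rightarrow> real) \<Rightarrow> nat \<Rightarrow> real" where
  "normalized_sum w \<equiv> \<lambda>j. (\<Sum>i<k. w i j) / sqrt (real k)"

definition reflect :: "(nat \<Rightarrow> real) \<Rightarrow> nat \<Rightarrow> real" where
  "reflect y = (\<lambda>i\<in>{..<n}. - y i)"

text \<open>How far the sample falls short of the mean of \<open>\<bar>\<langle>x, X\<rangle>\<bar>\<close>; it is at least \<open>k \<kappa> \<parallel>x\<parallel>\<close>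
  when \<open>x\<close> lies in the kernel.\<close>
definition deficit :: "(nat \<Rightarrow> real) \<Rightarrow> (nat \<Rightarrow> nat \<Rightarrow> real) \<Rightarrow> real" where
  "deficit x w = (\<Sum>i<k. (\<integral>y. \<bar>inner_n n x y\<bar> \<partial>\<mu>) - \<bar>inner_n n x (w i)\<bar>)"

lemma T_subset_Rn: "T \<subseteq> Rn n"
  using convex_body unfolding convex_body_def by blast

lemma sqrt_k_pos: "0 < sqrt (real k)"
  using k by simp

lemma measurable_inner_n[measurable]: "inner_n n x \<in> borel_measurable \<mu>"
proof -
  have "(\<lambda>y. \<Sum>i<n. x i * y i) \<in> borel_measurable (RnM n)" by measurable
  then show ?thesis
    unfolding inner_n_def[abs_def] using measurable_cong_sets[OF sets_\<mu> refl] by blast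
qed

text \<open>Isotropy is used only here: it makes linear forms square integrable.\<close>
lemma integrable_inner_n:
  assumes "x \<in> Rn n"
  shows "integrable \<mu> (inner_n n x)"
proof (cases "integrable \<mu> (\<lambda>y. (inner_n n x y)\<^sup>2)")
  case True
  interpret prob_space \<mu> by (fact \<mu>)
  show ?thesis by (rule square_integrable_imp_integrable[OF measurable_inner_n True])
next
  case False
  then have "norm_n n x = 0"
    using isotropic assms not_integrable_integral_eq[OF False] by simp
  then have "inner_n n x = (\<lambda>_. 0)"
    by (simp add: norm_n_eq_0_iff inner_n_def fun_eq_iff)
  then show ?thesis by simp
qed

lemma symmetric_family_inner_n:
  assumes "finite F" "F \<noteq> {}" "F \<subseteq> Rn n"
  shows "symmetric_family \<mu> (inner_n n) reflect F"
proof -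
  have "reflect \<in> measurable (RnM n) (RnM n)" unfolding reflect_def by measurable
  then have measurable: "reflect \<in> measurable \<mu> \<mu>"
    using measurable_cong_sets[OF sets_\<mu> sets_\<mu>] by blast
  have "distr \<mu> \<mu> reflect = distr \<mu> (RnM n) (\<lambda>y. \<lambda>i\<in>{..<n}. - y i)"
    by (rule distr_cong) (auto simp: sets_\<mu> reflect_def)
  then have "distr \<mu> \<mu> reflect = \<mu>"
    using symmetric by simp
  with measurable show ?thesis
    using assms \<mu> integrable_inner_n
    by (intro symmetric_family.intro) (auto simp: reflect_def inner_n_def sum_negf)
qed

lemma mean_abs_inner_n_ge:
  assumes x: "x \<in> Rn n"
  shows "\<kappa> * norm_n n x \<le> (\<integral>y. \<bar>inner_n n x y\<bar> \<partial>\<mu>)"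
proof -
  interpret prob_space \<mu> by (fact \<mu>)
  define A where "A = {y\<in>space \<mu>. lam * norm_n n x \<le> \<bar>inner_n n x y\<bar>}"
  have A: "A \<in> sets \<mu>" unfolding A_def by measurable
  have level: "0 \<le> lam * norm_n n x" using lam norm_n_nonneg[of n x] by simp
  have "\<kappa> * norm_n n x \<le> (lam * norm_n n x) * measure \<mu> A"
    using mult_left_mono[OF _ level, of "99/100" "measure \<mu> A"] small_ball x
    by (simp add: A_def mult_ac)
  also have "\<dots> = (\<integral>y. (lam * norm_n n x) * indicator A y \<partial>\<mu>)"
    using A by simp
  also have "\<dots> \<le> (\<integral>y. \<bar>inner_n n x y\<bar> \<partial>\<mu>)"
  proof (rule integral_mono)
    show "integrable \<mu> (\<lambda>y. lam * norm_n n x * indicator A y)"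
      using A by (intro Bochner_Integration.integrable_mult_right integrable_real_indicator)
        (auto simp: less_top[symmetric])
  qed (use level integrable_inner_n[OF x] in \<open>auto simp: A_def indicator_def\<close>)
  finally show ?thesis .
qed

lemma sum_inner_n_eq:
  "(\<Sum>i<k. inner_n n x (w i)) = sqrt (real k) * inner_n n (normalized_sum w) x"
proof -
  have "inner_n n (normalized_sum w) x = (\<Sum>j<n. \<Sum>i<k. w i j * x j) / sqrt (real k)"
    unfolding inner_n_def by (simp add: sum_divide_distrib sum_distrib_right)
  also have "(\<Sum>j<n. \<Sum>i<k. w i j * x j) = (\<Sum>i<k. inner_n n x (w i))"
    unfolding inner_n_def by (subst sum.swap) (simp add: mult.commute)
  finally show ?thesis using sqrt_k_pos by simp
qed

lemma expected_Max_sum_inner_n_le: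
  assumes F: "finite F" "F \<noteq> {}" "F \<subseteq> T" and "0 \<le> e"
    and mean_norm: "(\<integral>\<^sup>+ w. dual_norm n T (normalized_sum w) \<partial>samples) = ennreal e"
  shows "(\<integral>w. (MAX x\<in>F. \<Sum>i<k. inner_n n x (w i)) \<partial>samples) \<le> sqrt (real k) * e"
proof -
  interpret symmetric_family \<mu> "inner_n n" reflect F
    using symmetric_family_inner_n F T_subset_Rn by blast
  define g where "g w = (MAX x\<in>F. \<Sum>i<k. inner_n n x (w i))" for w
  have g: "integrable samples g"
    unfolding g_def by (auto intro!: integrable_rules)
  have "ennreal (\<bar>g w\<bar> / sqrt (real k)) \<le> dual_norm n T (normalized_sum w)" for w
  proof -
    have "g w \<in> (\<lambda>x. \<Sum>i<k. inner_n n x (w i)) ` F"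
      unfolding g_def using F by (intro Max_in) auto
    then obtain x where "x \<in> F" "g w = (\<Sum>i<k. inner_n n x (w i))" by auto
    then show ?thesis
      unfolding dual_norm_def sum_inner_n_eq using F sqrt_k_pos
      by (intro SUP_upper2[of x]) (auto simp: abs_mult inner_n_commute)
  qed
  then have "(\<integral>\<^sup>+ w. ennreal (\<bar>g w\<bar> / sqrt (real k)) \<partial>samples) \<le> ennreal e"
    unfolding mean_norm[symmetric] by (rule nn_integral_mono)
  then have "(\<integral>w. \<bar>g w\<bar> \<partial>samples) / sqrt (real k) \<le> e"
    using g \<open>0 \<le> e\<close> by (subst (asm) nn_integral_eq_integral) (auto simp: ennreal_le_iff)
  moreover have "(\<integral>w. g w \<partial>samples) \<le> (\<integral>w. \<bar>g w\<bar> \<partial>samples)"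
    using g by (intro integral_mono) auto
  ultimately show ?thesis
    unfolding g_def[symmetric] using sqrt_k_pos by (simp add: divide_le_eq mult.commute)
qed

lemma borel_measurable_deficit: "deficit x \<in> borel_measurable samples"
  unfolding deficit_def by measurable

lemma expected_Max_deficit_le:
  assumes F: "finite F" "F \<noteq> {}" "F \<subseteq> T" and "0 \<le> e"
    and mean_norm: "(\<integral>\<^sup>+ w. dual_norm n T (normalized_sum w) \<partial>samples) = ennreal e"
  shows "(\<integral>w. (MAX x\<in>F. deficit x w) \<partial>samples) \<le> 2 * (sqrt (real k) * e)"
proof -
  interpret symmetric_family \<mu> "inner_n n" reflect F
    using symmetric_family_inner_n F T_subset_Rn by blast
  have "(\<integral>w. (MAX x\<in>F. deficit x w) \<partial>samples)
      \<le> 2 * (\<integral>w. (MAX x\<in>F. \<Sum>i<k. inner_n n x (w i)) \<partial>samples)"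
    using symmetrization[of k] unfolding deficit_def mean_abs_def .
  also have "\<dots> \<le> 2 * (sqrt (real k) * e)"
    using expected_Max_sum_inner_n_le[OF F \<open>0 \<le> e\<close> mean_norm] by simp
  finally show ?thesis .
qed

lemma measure_Max_deficit_ge_le:
  assumes F: "finite F" "(\<lambda>_. 0) \<in> F" "F \<subseteq> T" and "0 \<le> e" and "0 < a"
    and mean_norm: "(\<integral>\<^sup>+ w. dual_norm n T (normalized_sum w) \<partial>samples) = ennreal e"
  shows "measure samples {w\<in>space samples. a \<le> (MAX x\<in>F. deficit x w)} \<le> 2 * (sqrt (real k) * e) / a"
proof -
  interpret symmetric_family \<mu> "inner_n n" reflect F
    using symmetric_family_inner_n F T_subset_Rn by blast
  have "deficit (\<lambda>_. 0) w = 0" for w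
    by (simp add: deficit_def inner_n_def)
  then have "0 \<le> (MAX x\<in>F. deficit x w)" for w
    using F by (metis Max_ge finite_imageI image_eqI)
  then have "measure samples {w\<in>space samples. a \<le> (MAX x\<in>F. deficit x w)}
      \<le> (\<integral>w. (MAX x\<in>F. deficit x w) \<partial>samples) / a"
    using \<open>0 < a\<close> unfolding deficit_def
    by (intro integral_Markov_inequality_measure[OF _ sets.top]) (auto intro!: integrable_rules)
  also have "\<dots> \<le> 2 * (sqrt (real k) * e) / a"
    using expected_Max_deficit_le[OF finite_F F_ne F(3) \<open>0 \<le> e\<close> mean_norm] \<open>0 < a\<close>
    by (simp add: divide_right_mono)
  finally show ?thesis .
qed

text \<open>A point of the kernel is orthogonal to every \<open>X\<^sub>i\<close>, so the deficit at nearby points is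
  close to its mean, which the small-ball condition bounds from below.\<close>
lemma deficit_large_near_kernel:
  assumes "0 < r" and x: "x \<in> T" "x \<in> ker_Gamma n k w" "r \<le> norm_n n x"
    and D: "D \<subseteq> {x\<in>T. r \<le> norm_n n x}"
      "\<And>x \<delta>. x \<in> {x\<in>T. r \<le> norm_n n x} \<Longrightarrow> 0 < \<delta> \<Longrightarrow> \<exists>y\<in>D. norm_n n (\<lambda>i. y i - x i) < \<delta>"
  shows "\<exists>y\<in>D. real k * \<kappa> * r / 2 < deficit y w"
proof -
  define a where "a = real k * \<kappa> * r / 2"
  define W where "W = (\<Sum>i<k. norm_n n (w i))"
  have "0 < a" "0 \<le> W"
    using k lam \<open>0 < r\<close> by (auto simp: a_def W_def intro: sum_nonneg norm_n_nonneg)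
  then obtain y where "y \<in> D" and y_x: "norm_n n (\<lambda>i. y i - x i) < a / (W + 1)"
    using D(2)[of x "a / (W + 1)"] x by auto
  then have y: "y \<in> Rn n" "r \<le> norm_n n y"
    using D(1) T_subset_Rn by auto
  have "\<bar>inner_n n y (w i)\<bar> \<le> norm_n n (w i) * norm_n n (\<lambda>j. y j - x j)" if "i < k" for i
    using abs_inner_n_le[of n "w i" "\<lambda>j. y j - x j"] inner_n_ker_Gamma[OF x(2) that]
    by (simp add: inner_n_diff_right inner_n_commute)
  then have "(\<Sum>i<k. \<bar>inner_n n y (w i)\<bar>) \<le> W * norm_n n (\<lambda>j. y j - x j)"
    unfolding W_def sum_distrib_right by (intro sum_mono) auto
  also have "\<dots> \<le> W * (a / (W + 1))"
    using y_x \<open>0 \<le> W\<close> by (intro mult_left_mono) auto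
  also have "\<dots> < a"
    using \<open>0 < a\<close> \<open>0 \<le> W\<close> by (simp add: field_simps)
  finally have "(\<Sum>i<k. \<bar>inner_n n y (w i)\<bar>) < a" .
  moreover have "\<kappa> * r \<le> (\<integral>z. \<bar>inner_n n y z\<bar> \<partial>\<mu>)"
    using mean_abs_inner_n_ge[OF y(1)] mult_left_mono[OF y(2), of \<kappa>] lam by linarith
  then have "real k * (\<kappa> * r) \<le> real k * (\<integral>z. \<bar>inner_n n y z\<bar> \<partial>\<mu>)"
    by (intro mult_left_mono) auto
  ultimately show ?thesis
    using \<open>y \<in> D\<close> by (intro bexI[of _ y]) (auto simp: deficit_def sum_subtractf a_def)
qed

lemma large_section_event:
  assumes "0 < r" "0 \<le> e"
    and mean_norm: "(\<integral>\<^sup>+ w. dual_norm n T (normalized_sum w) \<partial>samples) = ennreal e"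
  shows "\<exists>N\<in>sets samples. measure samples N \<le> 4 * e / (sqrt (real k) * \<kappa> * r) \<and>
           (\<forall>w\<in>space samples - N. \<forall>x\<in>T \<inter> ker_Gamma n k w. norm_n n x < r)"
proof -
  interpret samples: prob_space samples by (intro prob_space_PiM \<mu>)
  obtain D where D: "countable D" "D \<subseteq> {x\<in>T. r \<le> norm_n n x}"
    "\<And>x \<delta>. x \<in> {x\<in>T. r \<le> norm_n n x} \<Longrightarrow> 0 < \<delta> \<Longrightarrow> \<exists>y\<in>D. norm_n n (\<lambda>i. y i - x i) < \<delta>"
    using countable_dense_subset[where S="{x\<in>T. r \<le> norm_n n x}" and n=n] by blast
  obtain F where F: "\<And>m. finite (F m)" "\<And>m. (\<lambda>_. 0) \<in> F m" "\<And>m. F m \<subseteq> insert (\<lambda>_. 0) D"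
    "incseq F" "D \<subseteq> (\<Union>m. F m)"
    using countable_incseq_finite_cover[OF D(1)] by blast
  have F_T: "F m \<subseteq> T" for m
    using F(3)[of m] D(2) convex_body_zero[OF convex_body] by blast
  define a where "a = real k * \<kappa> * r / 2"
  have "0 < a" using k lam \<open>0 < r\<close> by (simp add: a_def)
  define E where "E m = {w\<in>space samples. a \<le> (MAX x\<in>F m. deficit x w)}" for m
  have E: "E m \<in> sets samples" for m
  proof -
    have [measurable]: "(\<lambda>w. MAX x\<in>F m. deficit x w) \<in> borel_measurable samples"
      using F(1) by (intro borel_measurable_Max borel_measurable_deficit)
    show ?thesis unfolding E_def by measurable
  qed
  have "measure samples (E m) \<le> 4 * e / (sqrt (real k) * \<kappa> * r)" for m
  proof -
    have "2 * (sqrt (real k) * e) / a = 4 * e / (sqrt (real k) * \<kappa> * r)"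
      using sqrt_k_pos lam \<open>0 < r\<close> by (simp add: a_def field_simps flip: real_sqrt_mult_self[of "real k"])
    then show ?thesis
      using measure_Max_deficit_ge_le[OF F(1,2) F_T \<open>0 \<le> e\<close> \<open>0 < a\<close> mean_norm]
      by (simp add: E_def)
  qed
  moreover have "incseq E"
  proof (rule incseq_SucI)
    fix m
    have "(MAX x\<in>F m. deficit x w) \<le> (MAX x\<in>F (Suc m). deficit x w)" for w
      using F(1) F(2)[of m] \<open>incseq F\<close> by (intro Max_mono image_mono) (auto simp: incseq_Suc_iff)
    then show "E m \<subseteq> E (Suc m)" unfolding E_def by (auto intro: order.trans)
  qed
  ultimately have "measure samples (\<Union>m. E m) \<le> 4 * e / (sqrt (real k) * \<kappa> * r)"
    using E by (intro LIMSEQ_le_const2[OF samples.finite_Lim_measure_incseq]) auto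
  moreover have "norm_n n x < r"
    if w: "w \<in> space samples - (\<Union>m. E m)" and x: "x \<in> T \<inter> ker_Gamma n k w" for w x
  proof (rule ccontr)
    assume "\<not> norm_n n x < r"
    then obtain y where "y \<in> D" "a < deficit y w"
      using deficit_large_near_kernel[OF \<open>0 < r\<close> IntD1[OF x] IntD2[OF x] _ D(2,3)]
      unfolding a_def by force
    moreover obtain j where "y \<in> F j"
      using F(5) \<open>y \<in> D\<close> by blast
    then have "deficit y w \<le> (MAX x\<in>F j. deficit x w)"
      using F(1) by (intro Max_ge) auto
    with \<open>a < deficit y w\<close> have "a \<le> (MAX x\<in>F j. deficit x w)" by linarith
    then show False using w by (auto simp: E_def)
  qed
  ultimately show ?thesis
    using E by (intro bexI[of _ "\<Union>m. E m"]) auto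
qed

lemma null_section_event:
  assumes mean_norm: "(\<integral>\<^sup>+ w. dual_norm n T (normalized_sum w) \<partial>samples) = 0"
  shows "\<exists>A\<in>sets samples. measure samples A = 1 \<and>
           (\<forall>w\<in>A. \<forall>x\<in>T \<inter> ker_Gamma n k w. norm_n n x \<le> 0)"
proof -
  interpret samples: prob_space samples by (intro prob_space_PiM \<mu>)
  \<comment> \<open>\<open>large_section_event\<close> needs \<open>0 < r\<close>: take the union of the null events for \<open>r = 1 / Suc m\<close>\<close>
  have "\<exists>N\<in>sets samples. measure samples N \<le> 0 \<and>
         (\<forall>w\<in>space samples - N. \<forall>x\<in>T \<inter> ker_Gamma n k w. norm_n n x < 1 / Suc m)" for m
    using large_section_event[of "1 / Suc m" 0] mean_norm by simp
  then obtain N where N: "\<And>m. N m \<in> sets samples" "\<And>m. measure samples (N m) \<le> 0"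
    "\<And>m w x. w \<in> space samples - N m \<Longrightarrow> x \<in> T \<inter> ker_Gamma n k w \<Longrightarrow> norm_n n x < 1 / Suc m"
    by metis
  have "emeasure samples (\<Union>m. N m) = 0"
    using N(1,2) by (intro emeasure_UN_eq_0)
      (auto simp: samples.emeasure_eq_measure measure_le_0_iff)
  then have "measure samples (space samples - (\<Union>m. N m)) = 1"
    using N(1) samples.prob_compl[of "\<Union>m. N m"] by (auto simp: samples.emeasure_eq_measure)
  moreover have "norm_n n x \<le> 0"
    if "w \<in> space samples - (\<Union>m. N m)" "x \<in> T \<inter> ker_Gamma n k w" for w x
  proof (rule ccontr)
    assume "\<not> norm_n n x \<le> 0"
    then obtain m where "1 / Suc m < norm_n n x"
      using reals_Archimedean[of "norm_n n x"] by (auto simp: inverse_eq_divide)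
    then show False using N(3)[of w m x] that by auto
  qed
  ultimately show ?thesis
    using N(1) by (intro bexI[of _ "space samples - (\<Union>m. N m)"]) auto
qed

lemma small_section_event:
  assumes "0 \<le> e"
    and mean_norm: "(\<integral>\<^sup>+ w. dual_norm n T (normalized_sum w) \<partial>samples) = ennreal e"
  shows "\<exists>A\<in>sets samples. 3/4 \<le> measure samples A \<and>
           (\<forall>w\<in>A. \<forall>x\<in>T \<inter> ker_Gamma n k w. norm_n n x \<le> 16 * e / (sqrt (real k) * \<kappa>))"
proof (cases "e = 0")
  case True
  with mean_norm obtain A where A: "A \<in> sets samples" "measure samples A = 1"
    "\<And>w x. w \<in> A \<Longrightarrow> x \<in> T \<inter> ker_Gamma n k w \<Longrightarrow> norm_n n x \<le> 0"
    using null_section_event by (metis ennreal_0)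
  with True show ?thesis
    by (intro bexI[of _ A]) auto
next
  case False
  interpret samples: prob_space samples by (intro prob_space_PiM \<mu>)
  define r where "r = 16 * e / (sqrt (real k) * \<kappa>)"
  have "0 < r" using False \<open>0 \<le> e\<close> sqrt_k_pos lam by (simp add: r_def)
  obtain N where N: "N \<in> sets samples" "measure samples N \<le> 4 * e / (sqrt (real k) * \<kappa> * r)"
    "\<And>w x. w \<in> space samples - N \<Longrightarrow> x \<in> T \<inter> ker_Gamma n k w \<Longrightarrow> norm_n n x < r"
    using large_section_event[OF \<open>0 < r\<close> \<open>0 \<le> e\<close> mean_norm] by blast
  moreover have "4 * e / (sqrt (real k) * \<kappa> * r) = 1/4"
    using False sqrt_k_pos lam by (simp add: r_def field_simps)
  ultimately have "measure samples N \<le> 1/4" by (simp only:)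
  then have "3/4 \<le> measure samples (space samples - N)"
    using samples.prob_compl[OF N(1)] by simp
  with N show ?thesis
    by (intro bexI[of _ "space samples - N"]) (auto simp: r_def less_imp_le)
qed

lemma diam_section_le:
  "\<exists>A\<in>sets samples. 3/4 \<le> measure samples A \<and>
     (\<forall>w\<in>A. diam_n n (T \<inter> ker_Gamma n k w)
        \<le> ennreal (32 / \<kappa> / sqrt (real k)) *
           max (\<integral>\<^sup>+ g. dual_norm n T g \<partial>gaussM n)
               (\<integral>\<^sup>+ w. dual_norm n T (normalized_sum w) \<partial>samples))"
  (is "\<exists>A\<in>_. _ \<and> (\<forall>w\<in>A. _ \<le> ennreal ?c * max ?G ?S)")
proof (cases "?S = \<top>")
  case True
  interpret samples: prob_space samples by (intro prob_space_PiM \<mu>)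
  have "0 < ?c" using lam sqrt_k_pos by simp
  with True show ?thesis
    by (intro bexI[of _ "space samples"]) (auto simp: ennreal_mult_top samples.prob_space)
next
  case False
  define e where "e = enn2real ?S"
  then have "0 \<le> e" and mean_norm: "?S = ennreal e"
    using False by (auto simp: ennreal_enn2real_if)
  obtain A where A: "A \<in> sets samples" "3/4 \<le> measure samples A"
    "\<And>w x. w \<in> A \<Longrightarrow> x \<in> T \<inter> ker_Gamma n k w \<Longrightarrow> norm_n n x \<le> 16 * e / (sqrt (real k) * \<kappa>)"
    using small_section_event[OF \<open>0 \<le> e\<close> mean_norm] by blast
  have "diam_n n (T \<inter> ker_Gamma n k w) \<le> ennreal ?c * max ?G ?S" if "w \<in> A" for w
  proof -
    have "diam_n n (T \<inter> ker_Gamma n k w) \<le> ennreal (2 * (16 * e / (sqrt (real k) * \<kappa>)))"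
      using A(3) that by (intro diam_n_le)
    also have "\<dots> = ennreal ?c * ?S"
      using lam sqrt_k_pos \<open>0 \<le> e\<close> mean_norm by (simp add: ennreal_mult[symmetric] field_simps)
    also have "\<dots> \<le> ennreal ?c * max ?G ?S"
      by (intro mult_left_mono) auto
    finally show ?thesis .
  qed
  with A show ?thesis by blast
qed

end

theorem theorem1p3:
  fixes lam :: real
  assumes "lam > 0"
  shows "\<exists>c::real. \<forall>(n::nat) (k::nat) (\<mu>::(nat \<Rightarrow> real) measure) (T::(nat \<Rightarrow> real) set).
     n \<ge> 1 \<longrightarrow> k \<ge> 1 \<longrightarrow>
     prob_space \<mu> \<longrightarrow> sets \<mu> = sets (RnM n) \<longrightarrow>
     distr \<mu> (RnM n) (\<lambda>y. \<lambda>i\<in>{..<n}. - y i) = \<mu> \<longrightarrow>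
     (\<forall>x\<in>Rn n. (\<integral>y. (inner_n n x y)\<^sup>2 \<partial>\<mu>) = (norm_n n x)\<^sup>2) \<longrightarrow>
     (\<forall>x\<in>Rn n. measure \<mu> {y\<in>space \<mu>. \<bar>inner_n n x y\<bar> \<ge> lam * norm_n n x} \<ge> 99/100) \<longrightarrow>
     convex_body n T \<longrightarrow>
     (\<exists>A\<in>sets (PiM {..<k} (\<lambda>_. \<mu>)). measure (PiM {..<k} (\<lambda>_. \<mu>)) A \<ge> 3/4 \<and>
        (\<forall>w\<in>A. diam_n n (T \<inter> ker_Gamma n k w)
           \<le> ennreal (c / sqrt (real k)) *
              max (\<integral>\<^sup>+ g. dual_norm n T g \<partial>gaussM n)
                  (\<integral>\<^sup>+ w'. dual_norm n T (\<lambda>j. (\<Sum>i<k. w' i j) / sqrt (real k)) \<partial>(PiM {..<k} (\<lambda>_. \<mu>)))))"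
  by (intro exI[of _ "32 / (99/100 * lam)"] allI impI small_ball_setting.diam_section_le
      small_ball_setting.intro assms) assumption+

end
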